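(* Consider a mean-variance team stochastic game as described in the context. Let $\boldsymbol{\mu},\boldsymbol{\mu}'\in\mathcal{U}$ and for $\delta\in[0,1]$ let $\delta_{\boldsymbol{\mu}}^{\boldsymbol{\mu}'}$ be the (centralized) stationary policy $\delta_{\boldsymbol{\mu}}^{\boldsymbol{\mu}'}(\boldsymbol{a}|s)=(1-\delta)\boldsymbol{\mu}(\boldsymbol{a}|s)+\delta\boldsymbol{\mu}'(\boldsymbol{a}|s)$ (the joint action follows $\boldsymbol{\mu}$ with probability $1-\delta$ and $\boldsymbol{\mu}'$ with probability $\delta$). Then $$\frac{\mathrm{d}J(\delta_{\boldsymbol{\mu}}^{\boldsymbol{\mu}'})}{\mathrm{d}\delta}\Big|_{\delta=0}=\mathbb{E}_{s\sim\pi^{\boldsymbol{\mu}},\,\boldsymbol{a}\sim\boldsymbol{\mu}'(\cdot|s)}\big[A_f^{\boldsymbol{\mu}}(s,\boldsymbol{a})\big],$$ where the derivative at $\delta=0$ is the one-sided (right) derivative.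
   Context: A team stochastic game consists of a finite set of agents $\mathcal{N}=\{1,\dots,N\}$, a finite state space $\mathcal{S}$, finite action sets $\mathcal{A}_i$ with joint action set $\mathcal{A}=\prod_i\mathcal{A}_i$, a transition kernel $P(s'|s,\boldsymbol{a})$ and a common reward $r:\mathcal{S}\times\mathcal{A}\to\mathbb{R}$. A policy of agent $i$ is $\mu_i:\mathcal{S}\to\Delta(\mathcal{A}_i)$ (set $\mathcal{U}_i$); a joint policy $\boldsymbol{\mu}\in\mathcal{U}=\prod_i\mathcal{U}_i$ has $\boldsymbol{\mu}(\boldsymbol{a}|s)=\prod_i\mu_i(a_i|s)$. More generally, any centralized stationary policy $\sigma:\mathcal{S}\to\Delta(\mathcal{A})$ induces the chain $P^{\sigma}(s'|s)=\sum_{\boldsymbol{a}}\sigma(\boldsymbol{a}|s)P(s'|s,\boldsymbol{a})$. Standing assumption: for every joint policy $\boldsymbol{\mu}\in\mathcal{U}$ the induced chain is ergodic; $\pi^{\sigma}$ denotes the stationary distribution of the chain induced by $\sigma$. For such $\sigma$: $\eta^{\sigma}=\sum_s\pi^{\sigma}(s)\sum_{\boldsymbol{a}}\sigma(\boldsymbol{a}|s)r(s,\boldsymbol{a})$, $\zeta^{\sigma}=\sum_s\pi^{\sigma}(s)\sum_{\boldsymbol{a}}\sigma(\boldsymbol{a}|s)(r(s,\boldsymbol{a})-\eta^{\sigma})^2$, and for fixed $\beta\ge0$, $J(\sigma)=J^{\sigma}=\eta^{\sigma}-\beta\zeta^{\sigma}$. Surrogate reward $f^{\sigma}(s,\boldsymbol{a})=r(s,\boldsymbol{a})-\beta(r(s,\boldsymbol{a})-\eta^{\sigma})^2$,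 $f^{\sigma}(s)=\sum_{\boldsymbol{a}}\sigma(\boldsymbol{a}|s)f^{\sigma}(s,\boldsymbol{a})$. $V_f^{\sigma}$ is a solution of the Poisson equation $V(s)=f^{\sigma}(s)-J^{\sigma}+\sum_{s'}P^{\sigma}(s'|s)V(s')$ (unique up to an additive constant, irrelevant below); $Q_f^{\sigma}(s,\boldsymbol{a})=f^{\sigma}(s,\boldsymbol{a})-J^{\sigma}+\sum_{s'}P(s'|s,\boldsymbol{a})V_f^{\sigma}(s')$; $A_f^{\sigma}(s,\boldsymbol{a})=Q_f^{\sigma}(s,\boldsymbol{a})-V_f^{\sigma}(s)$. *)

theory Defs
  imports Complex_Main
begin

(* States: a finite type 's.  Agents: a finite type 'i.  Agent i's action set: A i :: 'b set.
   Joint actions: functions a :: 'i => 'b with a i \<in> A i for all i. *)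

definition joint_actions :: "('i \<Rightarrow> 'b set) \<Rightarrow> ('i \<Rightarrow> 'b) set" where
  "joint_actions A = {a. \<forall>i. a i \<in> A i}"

definition team_game :: "('i::finite \<Rightarrow> 'b set) \<Rightarrow> ('s::finite \<Rightarrow> ('i \<Rightarrow> 'b) \<Rightarrow> 's \<Rightarrow> real) \<Rightarrow> bool" where
  "team_game A P \<longleftrightarrow> (\<forall>i. finite (A i) \<and> A i \<noteq> {}) \<and>
     (\<forall>s. \<forall>a\<in>joint_actions A. (\<forall>s'. P s a s' \<ge> 0) \<and> (\<Sum>s'\<in>UNIV. P s a s') = 1)"

definition local_policy :: "'b set \<Rightarrow> ('s \<Rightarrow> 'b \<Rightarrow> real) \<Rightarrow> bool" where
  "local_policy Ai m \<longleftrightarrow> (\<forall>s. (\<forall>b\<in>Ai. m s b \<ge> 0) \<and> (\<Sum>b\<in>Ai. m s b) = 1)"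

definition joint_policies :: "('i \<Rightarrow> 'b set) \<Rightarrow> ('i \<Rightarrow> 's \<Rightarrow> 'b \<Rightarrow> real) set" where
  "joint_policies A = {mu. \<forall>i. local_policy (A i) (mu i)}"

definition joint_prob :: "('i::finite \<Rightarrow> 's \<Rightarrow> 'b \<Rightarrow> real) \<Rightarrow> 's \<Rightarrow> ('i \<Rightarrow> 'b) \<Rightarrow> real" where
  "joint_prob mu s a = (\<Prod>i\<in>UNIV. mu i s (a i))"

definition induced_chain :: "('i \<Rightarrow> 'b set) \<Rightarrow> ('s \<Rightarrow> ('i \<Rightarrow> 'b) \<Rightarrow> 's \<Rightarrow> real)
    \<Rightarrow> ('s \<Rightarrow> ('i \<Rightarrow> 'b) \<Rightarrow> real) \<Rightarrow> 's \<Rightarrow> 's \<Rightarrow> real" where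
  "induced_chain A P sigma s s' = (\<Sum>a\<in>joint_actions A. sigma s a * P s a s')"

fun nstep :: "('s::finite \<Rightarrow> 's \<Rightarrow> real) \<Rightarrow> nat \<Rightarrow> 's \<Rightarrow> 's \<Rightarrow> real" where
  "nstep Q 0 s s' = (if s = s' then 1 else 0)"
| "nstep Q (Suc n) s s' = (\<Sum>t\<in>UNIV. nstep Q n s t * Q t s')"

definition irreducible_chain :: "('s::finite \<Rightarrow> 's \<Rightarrow> real) \<Rightarrow> bool" where
  "irreducible_chain Q \<longleftrightarrow> (\<forall>s s'. \<exists>n>0. nstep Q n s s' > 0)"

definition aperiodic_chain :: "('s::finite \<Rightarrow> 's \<Rightarrow> real) \<Rightarrow> bool" where
  "aperiodic_chain Q \<longleftrightarrow> (\<forall>s. Gcd {n::nat. n > 0 \<and> nstep Q n s s > 0} = 1)"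

definition ergodic_chain :: "('s::finite \<Rightarrow> 's \<Rightarrow> real) \<Rightarrow> bool" where
  "ergodic_chain Q \<longleftrightarrow> irreducible_chain Q \<and> aperiodic_chain Q"

definition is_stationary :: "('s::finite \<Rightarrow> 's \<Rightarrow> real) \<Rightarrow> ('s \<Rightarrow> real) \<Rightarrow> bool" where
  "is_stationary Q p \<longleftrightarrow> (\<forall>s. p s \<ge> 0) \<and> (\<Sum>s\<in>UNIV. p s) = 1 \<and>
     (\<forall>s'. (\<Sum>s\<in>UNIV. p s * Q s s') = p s')"

(* the stationary distribution pi^sigma (unique for ergodic chains) *)
definition stat_dist :: "('s::finite \<Rightarrow> 's \<Rightarrow> real) \<Rightarrow> 's \<Rightarrow> real" where
  "stat_dist Q = (THE p. is_stationary Q p)"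

definition pi_pol where
  "pi_pol A P sigma = stat_dist (induced_chain A P sigma)"

definition eta where
  "eta A P r sigma = (\<Sum>s\<in>UNIV. pi_pol A P sigma s * (\<Sum>a\<in>joint_actions A. sigma s a * r s a))"

definition zeta where
  "zeta A P r sigma = (\<Sum>s\<in>UNIV. pi_pol A P sigma s *
      (\<Sum>a\<in>joint_actions A. sigma s a * (r s a - eta A P r sigma)^2))"

definition Jmv where
  "Jmv A P r \<beta> sigma = eta A P r sigma - \<beta> * zeta A P r sigma"

definition f_sa where
  "f_sa A P r \<beta> sigma s a = r s a - \<beta> * (r s a - eta A P r sigma)^2"

definition f_s where
  "f_s A P r \<beta> sigma s = (\<Sum>a\<in>joint_actions A. sigma s a * f_sa A P r \<beta> sigma s a)"

definition poisson_sol where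
  "poisson_sol A P r \<beta> sigma V \<longleftrightarrow> (\<forall>s. V s = f_s A P r \<beta> sigma s - Jmv A P r \<beta> sigma +
      (\<Sum>s'\<in>UNIV. induced_chain A P sigma s s' * V s'))"

(* V_f^sigma: some solution of the Poisson equation (unique up to an additive constant) *)
definition V_f where
  "V_f A P r \<beta> sigma = (SOME V. poisson_sol A P r \<beta> sigma V)"

definition Q_f where
  "Q_f A P r \<beta> sigma s a = f_sa A P r \<beta> sigma s a - Jmv A P r \<beta> sigma +
      (\<Sum>s'\<in>UNIV. P s a s' * V_f A P r \<beta> sigma s')"

definition A_f where
  "A_f A P r \<beta> sigma s a = Q_f A P r \<beta> sigma s a - V_f A P r \<beta> sigma s"

definition mix_pol where
  "mix_pol mu mu' \<delta> s a = (1 - \<delta>) * joint_prob mu s a + \<delta> * joint_prob mu' s a"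

end

theory Submission
  imports Defs "HOL-Analysis.Analysis"
begin

(* Mixing the joint policies mixes the induced chains: P^delta = P^mu + delta (P^mu' - P^mu).
   If p is stationary for P^delta and V solves the Poisson equation of P^mu for a reward g,
   pairing the Poisson equation with p gives
     <p, g> = <pi^mu, g> + delta <p, (P^mu' - P^mu) V>.
   Hence pi^delta tends to pi^mu, and the right derivative at 0 of every stationary expectation
   along the mixture can be read off.  The variance is handled by the identity
     J(sigma) = E[r - beta (r - c)^2] + beta (eta^sigma - c)^2      for every constant c:
   with c = eta^mu the first term is a stationary expectation of the surrogate reward f^mu, and
   the second is beta times the square of a differentiable function vanishing at 0, so its
   derivative there is 0.
   Existence and uniqueness of stationary distributions and solvability of the Poisson equation
   for finite irreducible chains rest on a single fact: a nonzero left invariant vector of an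
   irreducible stochastic matrix has constant strict sign. *)

section \<open>Stationary distributions of finite Markov chains\<close>

definition stochastic :: "('s::finite \<Rightarrow> 's \<Rightarrow> real) \<Rightarrow> bool" where
  "stochastic Q \<longleftrightarrow> (\<forall>s t. Q s t \<ge> 0) \<and> (\<forall>s. (\<Sum>t\<in>UNIV. Q s t) = 1)"

lemma nstep_nonneg: "stochastic Q \<Longrightarrow> nstep Q n s t \<ge> 0"
  by (induction n arbitrary: t) (auto simp: stochastic_def intro!: sum_nonneg)

lemma left_invariant_pos_part:
  assumes Q: "stochastic Q" and inv: "\<forall>t. (\<Sum>s\<in>UNIV. y s * Q s t) = y t"
  shows "(\<Sum>s\<in>UNIV. max (y s) 0 * Q s t) = max (y t) 0"
proof -
  have ge: "(\<Sum>s\<in>UNIV. max (y s) 0 * Q s t) \<ge> max (y t) 0" for t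
  proof -
    have "(\<Sum>s\<in>UNIV. max (y s) 0 * Q s t) \<ge> (\<Sum>s\<in>UNIV. y s * Q s t)"
      using Q by (auto simp: stochastic_def intro!: sum_mono mult_right_mono)
    moreover have "(\<Sum>s\<in>UNIV. max (y s) 0 * Q s t) \<ge> 0"
      using Q by (auto simp: stochastic_def intro!: sum_nonneg)
    ultimately show ?thesis using inv by simp
  qed
  \<comment> \<open>the inequalities cannot be strict, since both sides have the same total mass\<close>
  have "(\<Sum>t\<in>UNIV. \<Sum>s\<in>UNIV. max (y s) 0 * Q s t) = (\<Sum>s\<in>UNIV. max (y s) 0 * (\<Sum>t\<in>UNIV. Q s t))"
    by (subst sum.swap) (simp add: sum_distrib_left)
  also have "\<dots> = (\<Sum>t\<in>UNIV. max (y t) 0)" using Q by (simp add: stochastic_def)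
  finally have "(\<Sum>t\<in>UNIV. (\<Sum>s\<in>UNIV. max (y s) 0 * Q s t) - max (y t) 0) = 0"
    by (simp add: sum_subtractf)
  then have "\<forall>t\<in>UNIV. (\<Sum>s\<in>UNIV. max (y s) 0 * Q s t) - max (y t) 0 = 0"
    using ge by (subst (asm) sum_nonneg_eq_0_iff) auto
  then show ?thesis by simp
qed

lemma left_invariant_nonneg_pos:
  assumes Q: "stochastic Q" and irr: "irreducible_chain Q"
    and inv: "\<forall>t. (\<Sum>s\<in>UNIV. z s * Q s t) = z t" and nonneg: "\<forall>s. z s \<ge> 0" and pos: "z s0 > 0"
  shows "z t > 0"
proof -
  have "\<forall>t. nstep Q n s0 t > 0 \<longrightarrow> z t > 0" for n
  proof (induction n)
    case 0
    then show ?case using pos by simp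
  next
    case (Suc n)
    show ?case
    proof (intro allI impI)
      fix t
      assume "nstep Q (Suc n) s0 t > 0"
      then have "0 < (\<Sum>u\<in>UNIV. nstep Q n s0 u * Q u t)" by simp
      then obtain u where u: "nstep Q n s0 u * Q u t > 0"
        by (metis (no_types, lifting) not_le sum_nonpos)
      have "nstep Q n s0 u \<ge> 0" "Q u t \<ge> 0"
        using Q nstep_nonneg by (auto simp: stochastic_def)
      with u have "nstep Q n s0 u > 0" "Q u t > 0" by (auto simp: zero_less_mult_iff)
      with Suc have "z u * Q u t > 0" by simp
      also have "z u * Q u t \<le> (\<Sum>s\<in>UNIV. z s * Q s t)"
        by (rule member_le_sum) (use Q nonneg in \<open>auto simp: stochastic_def\<close>)
      finally show "z t > 0" using inv by simp
    qed
  qed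
  moreover obtain n where "nstep Q n s0 t > 0"
    using irr by (auto simp: irreducible_chain_def)
  ultimately show ?thesis by blast
qed

lemma left_invariant_strict_sign:
  assumes Q: "stochastic Q" and irr: "irreducible_chain Q"
    and inv: "\<forall>t. (\<Sum>s\<in>UNIV. y s * Q s t) = y t" and nonzero: "y s0 \<noteq> 0"
  shows "(\<forall>t. y t > 0) \<or> (\<forall>t. y t < 0)"
proof -
  have pos: "\<forall>t. y t > 0" if inv: "\<forall>t. (\<Sum>s\<in>UNIV. y s * Q s t) = y t" and "y s1 > 0"
    for y :: "'a \<Rightarrow> real" and s1
  proof
    fix t
    have "max (y t) 0 > 0"
      by (rule left_invariant_nonneg_pos[OF Q irr, of "\<lambda>s. max (y s) 0" s1])
        (use left_invariant_pos_part[OF Q inv] \<open>y s1 > 0\<close> in auto)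
    then show "y t > 0" by (simp add: max_def split: if_splits)
  qed
  show ?thesis
  proof (cases "y s0 > 0")
    case True
    then show ?thesis using pos[OF inv] by blast
  next
    case False
    with nonzero have "- y s0 > 0" by simp
    moreover have "\<forall>t. (\<Sum>s\<in>UNIV. - y s * Q s t) = - y t"
      using inv by (simp add: sum_negf)
    ultimately show ?thesis using pos[of "\<lambda>s. - y s" s0] by auto
  qed
qed

definition id_minus :: "('s::finite \<Rightarrow> 's \<Rightarrow> real) \<Rightarrow> real^'s^'s" where
  "id_minus Q = (\<chi> i j. (if i = j then 1 else 0) - Q i j)"

lemma id_minus_mult_vec: "(id_minus Q *v x) $ i = x $ i - (\<Sum>j\<in>UNIV. Q i j * x $ j)"
  by (simp add: id_minus_def matrix_vector_mult_def left_diff_distrib sum_subtractf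
      if_distrib[where f="\<lambda>u. u * _"] cong: if_cong)

lemma vec_mult_id_minus: "(x v* id_minus Q) $ j = x $ j - (\<Sum>i\<in>UNIV. x $ i * Q i j)"
  by (simp add: id_minus_def vector_matrix_mult_def right_diff_distrib sum_subtractf
      if_distrib[where f="\<lambda>u. _ * u"] cong: if_cong)

lemma left_null_id_minus_iff: "y v* id_minus Q = 0 \<longleftrightarrow> (\<forall>t. (\<Sum>s\<in>UNIV. y $ s * Q s t) = y $ t)"
  by (simp add: vec_eq_iff vec_mult_id_minus) metis

lemma stationary_exists:
  assumes Q: "stochastic Q" and irr: "irreducible_chain Q"
  shows "\<exists>p. is_stationary Q p"
proof -
  have "id_minus Q *v vec 1 = 0"
    using Q by (simp add: vec_eq_iff id_minus_mult_vec stochastic_def flip: sum_distrib_right)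
  moreover have "(vec 1 :: real^'a) \<noteq> 0" by (simp add: vec_eq_iff)
  ultimately have "rank (transpose (id_minus Q)) \<noteq> CARD('a)"
    using matrix_nonfull_linear_equations_eq by (metis rank_transpose)
  then obtain y where "y \<noteq> 0" "transpose (id_minus Q) *v y = 0"
    using matrix_nonfull_linear_equations_eq by blast
  then obtain s0 where s0: "y $ s0 \<noteq> 0" and inv: "\<forall>t. (\<Sum>s\<in>UNIV. y $ s * Q s t) = y $ t"
    by (auto simp: vec_eq_iff transpose_matrix_vector left_null_id_minus_iff[symmetric])
  define S where "S = (\<Sum>s\<in>UNIV. y $ s)"
  have ratio_pos: "y $ s / S > 0" for s
    using left_invariant_strict_sign[OF Q irr, of "\<lambda>s. y $ s", OF inv s0]
  proof
    assume pos: "\<forall>t. y $ t > 0"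
    then have "S > 0" unfolding S_def by (intro sum_pos) auto
    then show ?thesis using pos by simp
  next
    assume neg: "\<forall>t. y $ t < 0"
    then have "0 < (\<Sum>s\<in>UNIV. - y $ s)" by (intro sum_pos) auto
    then have "S < 0" by (simp add: S_def sum_negf)
    then show ?thesis using neg by (simp add: divide_neg_neg)
  qed
  then have "S \<noteq> 0" using ratio_pos[of s0] by auto
  show ?thesis
  proof (intro exI[of _ "\<lambda>s. y $ s / S"], unfold is_stationary_def, intro conjI allI)
    show "(\<Sum>s\<in>UNIV. y $ s / S) = 1"
      using \<open>S \<noteq> 0\<close> by (simp add: S_def flip: sum_divide_distrib)
    show "(\<Sum>s\<in>UNIV. y $ s / S * Q s t) = y $ t / S" for t
      using inv by (simp add: times_divide_eq_left flip: sum_divide_distrib)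
  qed (use ratio_pos in \<open>simp add: less_imp_le\<close>)
qed

lemma stationary_orthogonal_left_invariant:
  assumes Q: "stochastic Q" and irr: "irreducible_chain Q" and st: "is_stationary Q p"
    and inv: "\<forall>t. (\<Sum>s\<in>UNIV. y s * Q s t) = y t" and orth: "(\<Sum>s\<in>UNIV. p s * y s) = 0"
  shows "y s = 0"
proof (rule ccontr)
  assume "y s \<noteq> 0"
  then have sign: "(\<forall>t. y t > 0) \<or> (\<forall>t. y t < 0)"
    by (rule left_invariant_strict_sign[OF Q irr inv])
  have nonneg: "\<forall>s. p s \<ge> 0" using st by (simp add: is_stationary_def)
  obtain s0 where s0: "p s0 > 0"
  proof -
    have "\<exists>s. p s \<noteq> 0"
      by (rule ccontr) (use st in \<open>simp add: is_stationary_def\<close>)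
    then obtain s where "p s \<noteq> 0" by blast
    with nonneg have "p s > 0" by (simp add: order_less_le)
    then show ?thesis by (rule that)
  qed
  from sign show False
  proof
    assume "\<forall>t. y t > 0"
    then have "(\<Sum>s\<in>UNIV. p s * y s) > 0"
      using nonneg s0 by (intro sum_pos2[of UNIV s0]) (auto intro: mult_nonneg_nonneg less_imp_le)
    then show False using orth by simp
  next
    assume "\<forall>t. y t < 0"
    then have "(\<Sum>s\<in>UNIV. p s * - y s) > 0"
      using nonneg s0
      by (intro sum_pos2[of UNIV s0]) (auto simp: mult_pos_neg mult_le_0_iff less_imp_le)
    then show False using orth by (simp add: sum_negf)
  qed
qed

text \<open>The range of \<open>I - Q\<close> lies in the hyperplane orthogonal to the stationary distribution \<open>p\<close>;
  within that hyperplane its orthogonal complement consists of left invariant vectors orthogonal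
  to \<open>p\<close>, hence is trivial, so the range is the whole hyperplane.\<close>

lemma poisson_solvable:
  assumes Q: "stochastic Q" and irr: "irreducible_chain Q" and st: "is_stationary Q p"
  shows "\<exists>V. \<forall>s. V s = g s - (\<Sum>t\<in>UNIV. p t * g t) + (\<Sum>t\<in>UNIV. Q s t * V t)"
proof -
  define M where "M = id_minus Q"
  define pv where "pv = (\<chi> s. p s)"
  define R where "R = range (\<lambda>x. M *v x)"
  define H where "H = {x. pv \<bullet> x = 0}"
  have R: "subspace R" unfolding R_def by (rule linear_subspace_image) auto
  have H: "subspace H" unfolding H_def by (rule subspace_hyperplane)
  have RH: "R \<subseteq> H"
  proof
    fix x
    assume "x \<in> R"
    then obtain z where z: "x = M *v z" by (auto simp: R_def)
    have "pv v* M = 0"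
      using st by (simp add: vec_eq_iff M_def vec_mult_id_minus pv_def is_stationary_def)
    moreover have "pv \<bullet> (M *v z) = (pv v* M) \<bullet> z" by (simp only: dot_lmul_matrix)
    ultimately show "x \<in> H" by (simp add: H_def z)
  qed
  have "{y \<in> H. \<forall>x \<in> R. orthogonal x y} \<subseteq> {0}"
  proof clarify
    fix y
    assume y: "y \<in> H" "\<forall>x \<in> R. orthogonal x y"
    have "orthogonal (M *v (y v* M)) y" using y by (auto simp: R_def)
    then have "(y v* M) \<bullet> (y v* M) = 0"
      by (simp add: orthogonal_def inner_commute flip: dot_lmul_matrix)
    then have "\<forall>t. (\<Sum>s\<in>UNIV. y $ s * Q s t) = y $ t"
      by (simp add: M_def left_null_id_minus_iff)
    moreover have "(\<Sum>s\<in>UNIV. p s * y $ s) = 0"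
      using y by (simp add: H_def pv_def inner_vec_def)
    ultimately have "y $ s = 0" for s
      by (rule stationary_orthogonal_left_invariant[OF Q irr st])
    then show "y = 0" by (simp add: vec_eq_iff)
  qed
  then have "dim {y \<in> H. \<forall>x \<in> R. orthogonal x y} = 0" by simp
  moreover have "dim {y \<in> H. \<forall>x \<in> R. orthogonal x y} + dim R = dim H"
    by (rule dim_subspace_orthogonal_to_vectors[OF R H RH])
  ultimately have "dim H \<le> dim R" by linarith
  then have "R = H" by (rule subspace_dim_equal[OF R H RH])
  define c where "c = (\<Sum>t\<in>UNIV. p t * g t)"
  have "pv \<bullet> (\<chi> s. g s - c) = (\<Sum>s\<in>UNIV. p s * g s) - c * (\<Sum>s\<in>UNIV. p s)"
    by (simp add: pv_def inner_vec_def right_diff_distrib sum_subtractf sum_distrib_left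
        mult.commute)
  then have "(\<chi> s. g s - c) \<in> H" using st by (simp add: H_def c_def is_stationary_def)
  then obtain x where x: "M *v x = (\<chi> s. g s - c)" using \<open>R = H\<close> by (auto simp: R_def)
  have "x $ s = g s - c + (\<Sum>t\<in>UNIV. Q s t * x $ t)" for s
  proof -
    have "(M *v x) $ s = g s - c" by (simp add: x)
    then show ?thesis by (simp add: M_def id_minus_mult_vec algebra_simps)
  qed
  then show ?thesis unfolding c_def by blast
qed

lemma stationary_unique:
  fixes Q :: "'s::finite \<Rightarrow> 's \<Rightarrow> real"
  assumes Q: "stochastic Q" and irr: "irreducible_chain Q"
    and p: "is_stationary Q p" and q: "is_stationary Q q"
  shows "q = p"
proof
  fix s0 :: 's
  define g where "g = (\<lambda>s. if s = s0 then 1 else (0::real))"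
  define c where "c = (\<Sum>t\<in>UNIV. p t * g t)"
  obtain V where V: "\<forall>s. V s = g s - c + (\<Sum>t\<in>UNIV. Q s t * V t)"
    using poisson_solvable[OF Q irr p] unfolding c_def by blast
  \<comment> \<open>pairing the Poisson equation of the indicator of \<open>s0\<close> with \<open>q\<close>\<close>
  have g: "g s = V s + c - (\<Sum>t\<in>UNIV. Q s t * V t)" for s
    using V by (simp add: algebra_simps)
  have "q s0 = (\<Sum>s\<in>UNIV. q s * g s)"
    by (simp add: g_def if_distrib[where f="\<lambda>u. _ * u"] cong: if_cong)
  also have "\<dots> = (\<Sum>s\<in>UNIV. q s * V s) + c * (\<Sum>s\<in>UNIV. q s)
      - (\<Sum>s\<in>UNIV. \<Sum>t\<in>UNIV. q s * Q s t * V t)"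
    by (simp add: g algebra_simps sum.distrib sum_subtractf sum_distrib_left sum_distrib_right)
  also have "(\<Sum>s\<in>UNIV. \<Sum>t\<in>UNIV. q s * Q s t * V t) = (\<Sum>t\<in>UNIV. (\<Sum>s\<in>UNIV. q s * Q s t) * V t)"
    by (subst sum.swap) (simp add: sum_distrib_right)
  also have "\<dots> = (\<Sum>t\<in>UNIV. q t * V t)" using q by (simp add: is_stationary_def)
  finally show "q s0 = p s0"
    using q
    by (simp add: is_stationary_def c_def g_def if_distrib[where f="\<lambda>u. _ * u"] cong: if_cong)
qed

lemma is_stationary_stat_dist:
  assumes "stochastic Q" and "irreducible_chain Q"
  shows "is_stationary Q (stat_dist Q)"
  unfolding stat_dist_def
  using stationary_exists[OF assms] stationary_unique[OF assms] by (metis theI)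

section \<open>Stationary expectations along a mixture of two chains\<close>

definition mix_chain :: "('s \<Rightarrow> 's \<Rightarrow> real) \<Rightarrow> ('s \<Rightarrow> 's \<Rightarrow> real) \<Rightarrow> real \<Rightarrow> 's \<Rightarrow> 's \<Rightarrow> real"
  where "mix_chain Q0 Q1 \<delta> s t = (1 - \<delta>) * Q0 s t + \<delta> * Q1 s t"

lemma mix_chain_0 [simp]: "mix_chain Q0 Q1 0 = Q0"
  by (simp add: fun_eq_iff mix_chain_def)

lemma stochastic_mix_chain:
  assumes "stochastic Q0" "stochastic Q1" "0 \<le> \<delta>" "\<delta> \<le> 1"
  shows "stochastic (mix_chain Q0 Q1 \<delta>)"
  using assms
  by (auto simp: stochastic_def mix_chain_def sum.distrib simp flip: sum_distrib_left)

lemma nstep_mix_chain_ge: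
  assumes Q0: "stochastic Q0" and Q1: "stochastic Q1" and \<delta>: "0 \<le> \<delta>" "\<delta> \<le> 1"
  shows "(1 - \<delta>) ^ n * nstep Q0 n s t \<le> nstep (mix_chain Q0 Q1 \<delta>) n s t"
proof (induction n arbitrary: t)
  case 0
  then show ?case by simp
next
  case (Suc n)
  have "(1 - \<delta>) ^ Suc n * nstep Q0 (Suc n) s t
      = (\<Sum>u\<in>UNIV. ((1 - \<delta>) ^ n * nstep Q0 n s u) * ((1 - \<delta>) * Q0 u t))"
    by (simp add: sum_distrib_left mult_ac)
  also have "\<dots> \<le> (\<Sum>u\<in>UNIV. nstep (mix_chain Q0 Q1 \<delta>) n s u * mix_chain Q0 Q1 \<delta> u t)"
  proof (rule sum_mono, rule mult_mono)
    fix u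
    show "(1 - \<delta>) ^ n * nstep Q0 n s u \<le> nstep (mix_chain Q0 Q1 \<delta>) n s u" by (rule Suc.IH)
    show "(1 - \<delta>) * Q0 u t \<le> mix_chain Q0 Q1 \<delta> u t"
      using Q1 \<delta> by (simp add: mix_chain_def stochastic_def)
    show "0 \<le> nstep (mix_chain Q0 Q1 \<delta>) n s u"
      by (rule nstep_nonneg[OF stochastic_mix_chain[OF Q0 Q1 \<delta>]])
    show "0 \<le> (1 - \<delta>) * Q0 u t"
      using Q0 \<delta> by (simp add: stochastic_def)
  qed
  finally show ?case by simp
qed

lemma irreducible_mix_chain:
  assumes "stochastic Q0" "stochastic Q1" "0 \<le> \<delta>" "\<delta> < 1" and irr: "irreducible_chain Q0"
  shows "irreducible_chain (mix_chain Q0 Q1 \<delta>)"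
  unfolding irreducible_chain_def
proof (intro allI)
  fix s s'
  obtain n where n: "n > 0" "nstep Q0 n s s' > 0"
    using irr by (auto simp: irreducible_chain_def)
  have "0 < (1 - \<delta>) ^ n * nstep Q0 n s s'" using n assms by simp
  also have "\<dots> \<le> nstep (mix_chain Q0 Q1 \<delta>) n s s'"
    by (rule nstep_mix_chain_ge) (use assms in auto)
  finally show "\<exists>n>0. 0 < nstep (mix_chain Q0 Q1 \<delta>) n s s'" using n by blast
qed

lemma stationary_mix_chain_pairing:
  assumes st: "is_stationary (mix_chain Q0 Q1 \<delta>) p"
    and V: "\<And>s. V s = g s - c + (\<Sum>t\<in>UNIV. Q0 s t * V t)"
  shows "(\<Sum>s\<in>UNIV. p s * g s) = c + \<delta> * (\<Sum>s\<in>UNIV. p s * (\<Sum>t\<in>UNIV. (Q1 s t - Q0 s t) * V t))"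
proof -
  let ?Q = "mix_chain Q0 Q1 \<delta>"
  have g: "g s = V s + c - (\<Sum>t\<in>UNIV. ?Q s t * V t) + \<delta> * (\<Sum>t\<in>UNIV. (Q1 s t - Q0 s t) * V t)" for s
    using V[of s]
    by (simp add: mix_chain_def algebra_simps sum.distrib sum_subtractf sum_distrib_left)
  have "(\<Sum>s\<in>UNIV. p s * (\<Sum>t\<in>UNIV. ?Q s t * V t)) = (\<Sum>s\<in>UNIV. \<Sum>t\<in>UNIV. p s * ?Q s t * V t)"
    by (simp add: sum_distrib_left mult.assoc)
  also have "\<dots> = (\<Sum>t\<in>UNIV. (\<Sum>s\<in>UNIV. p s * ?Q s t) * V t)"
    by (subst sum.swap) (simp add: sum_distrib_right)
  also have "\<dots> = (\<Sum>t\<in>UNIV. p t * V t)" using st by (simp add: is_stationary_def)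
  finally have "(\<Sum>s\<in>UNIV. p s * (\<Sum>t\<in>UNIV. ?Q s t * V t)) = (\<Sum>t\<in>UNIV. p t * V t)" .
  moreover have "(\<Sum>s\<in>UNIV. p s * g s) = (\<Sum>s\<in>UNIV. p s * V s) + c * (\<Sum>s\<in>UNIV. p s)
      - (\<Sum>s\<in>UNIV. p s * (\<Sum>t\<in>UNIV. ?Q s t * V t))
      + \<delta> * (\<Sum>s\<in>UNIV. p s * (\<Sum>t\<in>UNIV. (Q1 s t - Q0 s t) * V t))"
    by (simp add: g algebra_simps sum.distrib sum_subtractf sum_distrib_left)
  ultimately show ?thesis using st by (simp add: is_stationary_def)
qed

lemma stationary_mix_chain_tendsto:
  assumes Q0: "stochastic Q0" and irr: "irreducible_chain Q0"
    and st: "\<And>\<delta>. 0 \<le> \<delta> \<Longrightarrow> \<delta> < 1 \<Longrightarrow> is_stationary (mix_chain Q0 Q1 \<delta>) (\<pi> \<delta>)"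
  shows "((\<lambda>\<delta>. \<pi> \<delta> s0) \<longlongrightarrow> \<pi> 0 s0) (at_right 0)"
proof -
  define g where "g = (\<lambda>s. if s = s0 then 1 else (0::real))"
  obtain V where V: "\<And>s. V s = g s - (\<Sum>t\<in>UNIV. \<pi> 0 t * g t) + (\<Sum>t\<in>UNIV. Q0 s t * V t)"
    using poisson_solvable[OF Q0 irr st[of 0, simplified]] by blast
  define x where "x = (\<lambda>s. \<Sum>t\<in>UNIV. (Q1 s t - Q0 s t) * V t)"
  define B where "B = (\<Sum>s\<in>UNIV. \<bar>x s\<bar>)"
  have "\<bar>\<pi> \<delta> s0 - \<pi> 0 s0\<bar> \<le> \<delta> * B" if \<delta>: "0 < \<delta>" "\<delta> < 1" for \<delta>
  proof -
    have "(\<Sum>s\<in>UNIV. \<pi> \<delta> s * g s) = (\<Sum>t\<in>UNIV. \<pi> 0 t * g t) + \<delta> * (\<Sum>s\<in>UNIV. \<pi> \<delta> s * x s)"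
      unfolding x_def by (rule stationary_mix_chain_pairing[OF st V]) (use \<delta> in auto)
    then have "\<pi> \<delta> s0 - \<pi> 0 s0 = \<delta> * (\<Sum>s\<in>UNIV. \<pi> \<delta> s * x s)"
      by (simp add: g_def if_distrib[where f="\<lambda>u. _ * u"] cong: if_cong)
    moreover have "\<bar>\<Sum>s\<in>UNIV. \<pi> \<delta> s * x s\<bar> \<le> B"
    proof -
      have "0 \<le> \<pi> \<delta> s \<and> \<pi> \<delta> s \<le> 1" for s
      proof -
        have "\<pi> \<delta> s \<le> (\<Sum>s\<in>UNIV. \<pi> \<delta> s)"
          by (rule member_le_sum) (use st[of \<delta>] \<delta> in \<open>auto simp: is_stationary_def\<close>)
        then show ?thesis using st[of \<delta>] \<delta> by (simp add: is_stationary_def)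
      qed
      then have "\<bar>\<pi> \<delta> s * x s\<bar> \<le> \<bar>x s\<bar>" for s
        by (simp add: abs_mult mult_left_le_one_le)
      then show ?thesis
        unfolding B_def by (rule order_trans[OF sum_abs sum_mono])
    qed
    ultimately show ?thesis using \<delta> by (simp add: abs_mult)
  qed
  then have "\<forall>\<^sub>F \<delta> in at_right 0. norm (\<pi> \<delta> s0 - \<pi> 0 s0) \<le> \<delta> * B"
    using eventually_at_right_real[of 0 1] by (auto elim: eventually_mono)
  moreover have "((\<lambda>\<delta>. \<delta> * B) \<longlongrightarrow> 0) (at_right 0)"
    using tendsto_mult_left_zero[OF tendsto_ident_at] by blast
  ultimately have "((\<lambda>\<delta>. \<pi> \<delta> s0 - \<pi> 0 s0) \<longlongrightarrow> 0) (at_right 0)"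
    by (rule Lim_null_comparison)
  then show ?thesis by (simp add: LIM_zero_iff)
qed

lemma stationary_mix_chain_has_derivative:
  assumes Q0: "stochastic Q0" and irr: "irreducible_chain Q0"
    and st: "\<And>\<delta>. 0 \<le> \<delta> \<Longrightarrow> \<delta> < 1 \<Longrightarrow> is_stationary (mix_chain Q0 Q1 \<delta>) (\<pi> \<delta>)"
    and V: "\<And>s. V s = F0 s - (\<Sum>t\<in>UNIV. \<pi> 0 t * F0 t) + (\<Sum>t\<in>UNIV. Q0 s t * V t)"
  shows "((\<lambda>\<delta>. \<Sum>s\<in>UNIV. \<pi> \<delta> s * ((1 - \<delta>) * F0 s + \<delta> * F1 s)) has_real_derivative
           (\<Sum>s\<in>UNIV. \<pi> 0 s * ((\<Sum>t\<in>UNIV. (Q1 s t - Q0 s t) * V t) + (F1 s - F0 s)))) (at_right 0)"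
proof -
  define E where "E = (\<lambda>\<delta>. \<Sum>s\<in>UNIV. \<pi> \<delta> s * ((1 - \<delta>) * F0 s + \<delta> * F1 s))"
  define h where "h = (\<lambda>s. (\<Sum>t\<in>UNIV. (Q1 s t - Q0 s t) * V t) + (F1 s - F0 s))"
  have "(E \<delta> - E 0) / (\<delta> - 0) = (\<Sum>s\<in>UNIV. \<pi> \<delta> s * h s)" if \<delta>: "0 < \<delta>" "\<delta> < 1" for \<delta>
  proof -
    have "(\<Sum>s\<in>UNIV. \<pi> \<delta> s * F0 s)
        = E 0 + \<delta> * (\<Sum>s\<in>UNIV. \<pi> \<delta> s * (\<Sum>t\<in>UNIV. (Q1 s t - Q0 s t) * V t))"
      unfolding E_def using stationary_mix_chain_pairing[OF st V, of \<delta>] \<delta> by simp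
    moreover have "E \<delta> = (\<Sum>s\<in>UNIV. \<pi> \<delta> s * F0 s) + \<delta> * (\<Sum>s\<in>UNIV. \<pi> \<delta> s * (F1 s - F0 s))"
      by (simp add: E_def algebra_simps sum.distrib sum_subtractf sum_distrib_left)
    moreover have "(\<Sum>s\<in>UNIV. \<pi> \<delta> s * h s) = (\<Sum>s\<in>UNIV. \<pi> \<delta> s * (\<Sum>t\<in>UNIV. (Q1 s t - Q0 s t) * V t))
        + (\<Sum>s\<in>UNIV. \<pi> \<delta> s * (F1 s - F0 s))"
      by (simp add: h_def distrib_left sum.distrib)
    ultimately show ?thesis using \<delta> by (simp add: field_simps)
  qed
  then have "\<forall>\<^sub>F \<delta> in at_right 0. (E \<delta> - E 0) / (\<delta> - 0) = (\<Sum>s\<in>UNIV. \<pi> \<delta> s * h s)"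
    using eventually_at_right_real[of 0 1] by (auto elim: eventually_mono)
  moreover have "((\<lambda>\<delta>. \<Sum>s\<in>UNIV. \<pi> \<delta> s * h s) \<longlongrightarrow> (\<Sum>s\<in>UNIV. \<pi> 0 s * h s)) (at_right 0)"
    by (intro tendsto_sum tendsto_mult tendsto_const stationary_mix_chain_tendsto[OF Q0 irr st])
  ultimately have "((\<lambda>\<delta>. (E \<delta> - E 0) / (\<delta> - 0)) \<longlongrightarrow> (\<Sum>s\<in>UNIV. \<pi> 0 s * h s)) (at_right 0)"
    by (rule tendsto_cong[THEN iffD2])
  then show ?thesis unfolding E_def h_def has_field_derivative_iff .
qed

lemma mean_variance_mix_chain_has_derivative:
  assumes Q0: "stochastic Q0" and irr: "irreducible_chain Q0"
    and st: "\<And>\<delta>. 0 \<le> \<delta> \<Longrightarrow> \<delta> < 1 \<Longrightarrow> is_stationary (mix_chain Q0 Q1 \<delta>) (\<pi> \<delta>)"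
    and V: "\<And>s. V s = F0 s - (\<Sum>t\<in>UNIV. \<pi> 0 t * F0 t) + (\<Sum>t\<in>UNIV. Q0 s t * V t)"
    and J: "\<And>\<delta>. 0 \<le> \<delta> \<Longrightarrow> \<delta> < 1 \<Longrightarrow> J \<delta> = (\<Sum>s\<in>UNIV. \<pi> \<delta> s * ((1 - \<delta>) * F0 s + \<delta> * F1 s))
            + \<beta> * ((\<Sum>s\<in>UNIV. \<pi> \<delta> s * ((1 - \<delta>) * R0 s + \<delta> * R1 s)) - (\<Sum>s\<in>UNIV. \<pi> 0 s * R0 s))\<^sup>2"
  shows "(J has_real_derivative
            (\<Sum>s\<in>UNIV. \<pi> 0 s * ((\<Sum>t\<in>UNIV. (Q1 s t - Q0 s t) * V t) + (F1 s - F0 s)))) (at_right 0)"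
proof -
  let ?R = "\<lambda>\<delta>. (\<Sum>s\<in>UNIV. \<pi> \<delta> s * ((1 - \<delta>) * R0 s + \<delta> * R1 s)) - (\<Sum>s\<in>UNIV. \<pi> 0 s * R0 s)"
  let ?E = "\<lambda>\<delta>. (\<Sum>s\<in>UNIV. \<pi> \<delta> s * ((1 - \<delta>) * F0 s + \<delta> * F1 s)) + \<beta> * (?R \<delta>)\<^sup>2"
  obtain VR where "\<And>s. VR s = R0 s - (\<Sum>t\<in>UNIV. \<pi> 0 t * R0 t) + (\<Sum>t\<in>UNIV. Q0 s t * VR t)"
    using poisson_solvable[OF Q0 irr st[of 0, simplified]] by blast
  from stationary_mix_chain_has_derivative[OF Q0 irr st this, of R1]
  obtain DR where "(?R has_real_derivative DR) (at_right 0)"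
    using DERIV_diff[OF _ DERIV_const] by blast
  \<comment> \<open>the variance enters through the square of a function vanishing at \<open>0\<close>\<close>
  from DERIV_cmult[OF DERIV_power[OF this, of 2], of \<beta>]
  have "((\<lambda>\<delta>. \<beta> * (?R \<delta>)\<^sup>2) has_real_derivative 0) (at_right 0)" by simp
  with stationary_mix_chain_has_derivative[OF Q0 irr st V, of F1]
  have deriv: "(?E has_real_derivative
      (\<Sum>s\<in>UNIV. \<pi> 0 s * ((\<Sum>t\<in>UNIV. (Q1 s t - Q0 s t) * V t) + (F1 s - F0 s)))) (at_right 0)"
    using DERIV_add by fastforce
  have "\<forall>\<^sub>F \<delta> in at_right 0. 0 \<le> \<delta> \<and> \<delta> < (1::real)"
    using eventually_at_right_real[OF zero_less_one] by eventually_elim auto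
  then have "\<forall>\<^sub>F \<delta> in at_right 0. ?E \<delta> = J \<delta>" by eventually_elim (simp add: J)
  moreover have "?E 0 = J 0" by (simp add: J)
  ultimately show ?thesis
    using deriv by (rule has_field_derivative_cong_eventually[THEN iffD1])
qed

section \<open>The mean-variance objective of a team game\<close>

lemma weighted_variance_shift:
  fixes w x :: "'a \<Rightarrow> real"
  assumes "(\<Sum>z\<in>X. w z) = 1" and m: "m = (\<Sum>z\<in>X. w z * x z)"
  shows "(\<Sum>z\<in>X. w z * (x z - c)\<^sup>2) = (\<Sum>z\<in>X. w z * (x z - m)\<^sup>2) + (m - c)\<^sup>2"
proof -
  have "(\<Sum>z\<in>X. w z * (x z - c)\<^sup>2)
      = (\<Sum>z\<in>X. w z * (x z - m)\<^sup>2 + 2 * (m - c) * (w z * x z)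
          - 2 * (m - c) * m * w z + (m - c)\<^sup>2 * w z)"
    by (rule sum.cong) (auto simp: power2_eq_square algebra_simps)
  also have "\<dots> = (\<Sum>z\<in>X. w z * (x z - m)\<^sup>2) + 2 * (m - c) * (\<Sum>z\<in>X. w z * x z)
      - 2 * (m - c) * m * (\<Sum>z\<in>X. w z) + (m - c)\<^sup>2 * (\<Sum>z\<in>X. w z)"
    by (simp add: sum.distrib sum_subtractf sum_distrib_left)
  finally show ?thesis using assms by (simp add: power2_eq_square algebra_simps)
qed

lemma sum_nested_eq_sum_Times:
  fixes p :: "'s \<Rightarrow> real"
  shows "(\<Sum>s\<in>S. p s * (\<Sum>a\<in>B. q s a * x s a))
    = (\<Sum>z\<in>S \<times> B. p (fst z) * q (fst z) (snd z) * x (fst z) (snd z))"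
proof -
  have "(\<Sum>s\<in>S. p s * (\<Sum>a\<in>B. q s a * x s a)) = (\<Sum>s\<in>S. \<Sum>a\<in>B. p s * q s a * x s a)"
    by (simp add: sum_distrib_left mult.assoc)
  also have "\<dots> = (\<Sum>(s, a)\<in>S \<times> B. p s * q s a * x s a)" by (rule sum.cartesian_product)
  finally show ?thesis by (simp add: case_prod_beta)
qed

lemma Jmv_eq_shift:
  assumes pi: "(\<Sum>s\<in>UNIV. pi_pol A P \<sigma> s) = 1"
    and \<sigma>: "\<And>s. (\<Sum>a\<in>joint_actions A. \<sigma> s a) = 1"
  shows "Jmv A P r \<beta> \<sigma>
    = (\<Sum>s\<in>UNIV. pi_pol A P \<sigma> s * (\<Sum>a\<in>joint_actions A. \<sigma> s a * (r s a - \<beta> * (r s a - c)\<^sup>2)))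
      + \<beta> * (eta A P r \<sigma> - c)\<^sup>2"
proof -
  define w where "w = (\<lambda>z. pi_pol A P \<sigma> (fst z) * \<sigma> (fst z) (snd z))"
  define x where "x = (\<lambda>z. r (fst z) (snd z))"
  let ?X = "UNIV \<times> joint_actions A"
  have "(\<Sum>z\<in>?X. w z) = (\<Sum>s\<in>UNIV. pi_pol A P \<sigma> s * (\<Sum>a\<in>joint_actions A. \<sigma> s a * 1))"
    by (simp only: sum_nested_eq_sum_Times) (simp add: w_def)
  then have w: "(\<Sum>z\<in>?X. w z) = 1" using pi \<sigma> by simp
  have \<eta>: "eta A P r \<sigma> = (\<Sum>z\<in>?X. w z * x z)"
    unfolding eta_def by (simp only: sum_nested_eq_sum_Times) (simp add: w_def x_def)
  have "zeta A P r \<sigma> = (\<Sum>z\<in>?X. w z * (x z - eta A P r \<sigma>)\<^sup>2)"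
    unfolding zeta_def by (simp only: sum_nested_eq_sum_Times) (simp add: w_def x_def)
  then have "(\<Sum>z\<in>?X. w z * (x z - c)\<^sup>2) = zeta A P r \<sigma> + (eta A P r \<sigma> - c)\<^sup>2"
    using weighted_variance_shift[OF w \<eta>, of c] by simp
  moreover have "(\<Sum>s\<in>UNIV. pi_pol A P \<sigma> s *
        (\<Sum>a\<in>joint_actions A. \<sigma> s a * (r s a - \<beta> * (r s a - c)\<^sup>2)))
      = (\<Sum>z\<in>?X. w z * x z) - \<beta> * (\<Sum>z\<in>?X. w z * (x z - c)\<^sup>2)"
    by (simp only: sum_nested_eq_sum_Times)
      (simp add: w_def x_def right_diff_distrib sum_subtractf sum_distrib_left mult_ac)
  ultimately show ?thesis by (simp add: Jmv_def \<eta> algebra_simps)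
qed

corollary Jmv_eq_stationary_f_s:
  assumes "(\<Sum>s\<in>UNIV. pi_pol A P \<sigma> s) = 1" and "\<And>s. (\<Sum>a\<in>joint_actions A. \<sigma> s a) = 1"
  shows "Jmv A P r \<beta> \<sigma> = (\<Sum>s\<in>UNIV. pi_pol A P \<sigma> s * f_s A P r \<beta> \<sigma> s)"
  using Jmv_eq_shift[OF assms, of r \<beta> "eta A P r \<sigma>"] by (simp add: f_s_def f_sa_def)

lemma joint_actions_PiE: "joint_actions A = Pi\<^sub>E UNIV A"
  by (auto simp: joint_actions_def PiE_def Pi_def extensional_def)

lemma joint_prob_nonneg:
  "mu \<in> joint_policies A \<Longrightarrow> a \<in> joint_actions A \<Longrightarrow> joint_prob mu s a \<ge> 0"
  by (auto simp: joint_prob_def joint_policies_def local_policy_def joint_actions_def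
      intro!: prod_nonneg)

lemma sum_joint_prob:
  assumes "team_game A P" "mu \<in> joint_policies A"
  shows "(\<Sum>a\<in>joint_actions A. joint_prob mu s a) = 1"
proof -
  have "(\<Sum>a\<in>joint_actions A. joint_prob mu s a) = (\<Prod>i\<in>UNIV. \<Sum>b\<in>A i. mu i s b)"
    unfolding joint_actions_PiE joint_prob_def
    by (rule prod_sum_PiE[symmetric]) (use assms in \<open>auto simp: team_game_def\<close>)
  also have "\<dots> = 1" using assms(2) by (simp add: joint_policies_def local_policy_def)
  finally show ?thesis .
qed

lemma stochastic_induced_chain:
  assumes game: "team_game A P" and mu: "mu \<in> joint_policies A"
  shows "stochastic (induced_chain A P (joint_prob mu))"
  unfolding stochastic_def
proof (intro conjI allI)
  fix s t
  show "0 \<le> induced_chain A P (joint_prob mu) s t"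
    using game joint_prob_nonneg[OF mu]
    by (auto simp: induced_chain_def team_game_def intro!: sum_nonneg)
next
  fix s
  have "(\<Sum>t\<in>UNIV. induced_chain A P (joint_prob mu) s t)
      = (\<Sum>a\<in>joint_actions A. joint_prob mu s a * (\<Sum>t\<in>UNIV. P s a t))"
    unfolding induced_chain_def by (subst sum.swap) (simp add: sum_distrib_left)
  also have "\<dots> = 1" using game sum_joint_prob[OF game mu] by (simp add: team_game_def)
  finally show "(\<Sum>t\<in>UNIV. induced_chain A P (joint_prob mu) s t) = 1" .
qed

lemma is_stationary_pi_pol:
  assumes game: "team_game A P"
    and erg: "\<forall>nu\<in>joint_policies A. ergodic_chain (induced_chain A P (joint_prob nu))"
    and mu: "mu \<in> joint_policies A"
  shows "is_stationary (induced_chain A P (joint_prob mu)) (pi_pol A P (joint_prob mu))"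
  unfolding pi_pol_def
  using erg mu
  by (intro is_stationary_stat_dist stochastic_induced_chain game mu) (auto simp: ergodic_chain_def)

lemma Jmv_joint_prob:
  assumes game: "team_game A P"
    and erg: "\<forall>nu\<in>joint_policies A. ergodic_chain (induced_chain A P (joint_prob nu))"
    and mu: "mu \<in> joint_policies A"
  shows "Jmv A P r \<beta> (joint_prob mu)
    = (\<Sum>s\<in>UNIV. pi_pol A P (joint_prob mu) s * f_s A P r \<beta> (joint_prob mu) s)"
  using is_stationary_pi_pol[OF game erg mu] sum_joint_prob[OF game mu]
  by (intro Jmv_eq_stationary_f_s) (auto simp: is_stationary_def)

lemma poisson_sol_V_f:
  assumes game: "team_game A P"
    and erg: "\<forall>nu\<in>joint_policies A. ergodic_chain (induced_chain A P (joint_prob nu))"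
    and mu: "mu \<in> joint_policies A"
  shows "poisson_sol A P r \<beta> (joint_prob mu) (V_f A P r \<beta> (joint_prob mu))"
proof -
  have "irreducible_chain (induced_chain A P (joint_prob mu))"
    using erg mu by (simp add: ergodic_chain_def)
  from poisson_solvable[OF stochastic_induced_chain[OF game mu] this
      is_stationary_pi_pol[OF game erg mu]]
  have "\<exists>V. poisson_sol A P r \<beta> (joint_prob mu) V"
    by (simp add: poisson_sol_def Jmv_joint_prob[OF game erg mu])
  then show ?thesis unfolding V_f_def by (rule someI_ex)
qed

lemma sum_A_f:
  assumes V: "poisson_sol A P r \<beta> \<sigma> (V_f A P r \<beta> \<sigma>)"
    and \<sigma>': "\<And>s. (\<Sum>a\<in>joint_actions A. \<sigma>' s a) = 1"
  shows "(\<Sum>a\<in>joint_actions A. \<sigma>' s a * A_f A P r \<beta> \<sigma> s a)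
    = (\<Sum>t\<in>UNIV. (induced_chain A P \<sigma>' s t - induced_chain A P \<sigma> s t) * V_f A P r \<beta> \<sigma> t)
      + ((\<Sum>a\<in>joint_actions A. \<sigma>' s a * f_sa A P r \<beta> \<sigma> s a) - f_s A P r \<beta> \<sigma> s)"
proof -
  let ?V = "V_f A P r \<beta> \<sigma>"
  have "(\<Sum>a\<in>joint_actions A. \<sigma>' s a * A_f A P r \<beta> \<sigma> s a)
      = (\<Sum>a\<in>joint_actions A. \<sigma>' s a * f_sa A P r \<beta> \<sigma> s a - Jmv A P r \<beta> \<sigma> * \<sigma>' s a
          + \<sigma>' s a * (\<Sum>t\<in>UNIV. P s a t * ?V t) - ?V s * \<sigma>' s a)"
    by (rule sum.cong) (simp_all add: A_f_def Q_f_def algebra_simps)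
  also have "\<dots> = (\<Sum>a\<in>joint_actions A. \<sigma>' s a * f_sa A P r \<beta> \<sigma> s a)
        - Jmv A P r \<beta> \<sigma> * (\<Sum>a\<in>joint_actions A. \<sigma>' s a)
        + (\<Sum>a\<in>joint_actions A. \<sigma>' s a * (\<Sum>t\<in>UNIV. P s a t * ?V t))
        - ?V s * (\<Sum>a\<in>joint_actions A. \<sigma>' s a)"
    by (simp only: sum.distrib sum_subtractf sum_distrib_left)
  also have "(\<Sum>a\<in>joint_actions A. \<sigma>' s a * (\<Sum>t\<in>UNIV. P s a t * ?V t))
      = (\<Sum>t\<in>UNIV. induced_chain A P \<sigma>' s t * ?V t)"
    unfolding induced_chain_def sum_distrib_left sum_distrib_right
    by (subst sum.swap) (simp add: mult.assoc)
  also have "?V s = f_s A P r \<beta> \<sigma> s - Jmv A P r \<beta> \<sigma> + (\<Sum>t\<in>UNIV. induced_chain A P \<sigma> s t * ?V t)"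
    using V unfolding poisson_sol_def by blast
  finally show ?thesis
    using \<sigma>' by (simp add: left_diff_distrib sum_subtractf)
qed

lemma mix_pol_0 [simp]: "mix_pol mu mu' 0 = joint_prob mu"
  by (simp add: fun_eq_iff mix_pol_def)

lemma sum_mix_pol:
  "(\<Sum>a\<in>X. mix_pol mu mu' \<delta> s a * h a)
    = (1 - \<delta>) * (\<Sum>a\<in>X. joint_prob mu s a * h a) + \<delta> * (\<Sum>a\<in>X. joint_prob mu' s a * h a)"
  by (simp add: mix_pol_def distrib_right sum.distrib mult.assoc flip: sum_distrib_left)

lemma induced_chain_mix_pol:
  "induced_chain A P (mix_pol mu mu' \<delta>)
    = mix_chain (induced_chain A P (joint_prob mu)) (induced_chain A P (joint_prob mu')) \<delta>"
  by (simp add: fun_eq_iff induced_chain_def mix_chain_def sum_mix_pol)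

lemma is_stationary_pi_pol_mix_pol:
  assumes game: "team_game A P"
    and erg: "\<forall>nu\<in>joint_policies A. ergodic_chain (induced_chain A P (joint_prob nu))"
    and mu: "mu \<in> joint_policies A" and mu': "mu' \<in> joint_policies A"
    and \<delta>: "0 \<le> \<delta>" "\<delta> < 1"
  shows "is_stationary
      (mix_chain (induced_chain A P (joint_prob mu)) (induced_chain A P (joint_prob mu')) \<delta>)
      (pi_pol A P (mix_pol mu mu' \<delta>))"
  unfolding pi_pol_def induced_chain_mix_pol
  using erg mu \<delta>
  by (intro is_stationary_stat_dist stochastic_mix_chain irreducible_mix_chain
      stochastic_induced_chain game mu mu') (auto simp: ergodic_chain_def)

lemma Jmv_mix_pol:
  assumes game: "team_game A P"
    and erg: "\<forall>nu\<in>joint_policies A. ergodic_chain (induced_chain A P (joint_prob nu))"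
    and mu: "mu \<in> joint_policies A" and mu': "mu' \<in> joint_policies A"
    and \<delta>: "0 \<le> \<delta>" "\<delta> < 1"
  shows "Jmv A P r \<beta> (mix_pol mu mu' \<delta>)
    = (\<Sum>s\<in>UNIV. pi_pol A P (mix_pol mu mu' \<delta>) s * ((1 - \<delta>) * f_s A P r \<beta> (joint_prob mu) s
          + \<delta> * (\<Sum>a\<in>joint_actions A. joint_prob mu' s a * f_sa A P r \<beta> (joint_prob mu) s a)))
      + \<beta> * ((\<Sum>s\<in>UNIV. pi_pol A P (mix_pol mu mu' \<delta>) s *
            ((1 - \<delta>) * (\<Sum>a\<in>joint_actions A. joint_prob mu s a * r s a)
              + \<delta> * (\<Sum>a\<in>joint_actions A. joint_prob mu' s a * r s a)))
          - (\<Sum>s\<in>UNIV. pi_pol A P (joint_prob mu) s *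
              (\<Sum>a\<in>joint_actions A. joint_prob mu s a * r s a)))\<^sup>2"
proof -
  have "(\<Sum>s\<in>UNIV. pi_pol A P (mix_pol mu mu' \<delta>) s) = 1"
    using is_stationary_pi_pol_mix_pol[OF game erg mu mu' \<delta>] by (simp add: is_stationary_def)
  moreover have "(\<Sum>a\<in>joint_actions A. mix_pol mu mu' \<delta> s a) = 1" for s
    by (simp add: mix_pol_def sum.distrib sum_joint_prob[OF game mu] sum_joint_prob[OF game mu']
        flip: sum_distrib_left)
  ultimately show ?thesis
    using Jmv_eq_shift[of A P "mix_pol mu mu' \<delta>" r \<beta> "eta A P r (joint_prob mu)"]
    by (simp add: sum_mix_pol f_s_def f_sa_def eta_def)
qed

theorem lemma2:
  fixes A :: "'i::finite \<Rightarrow> 'b set"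
    and P :: "'s::finite \<Rightarrow> ('i \<Rightarrow> 'b) \<Rightarrow> 's \<Rightarrow> real"
    and r :: "'s \<Rightarrow> ('i \<Rightarrow> 'b) \<Rightarrow> real"
    and \<beta> :: real
    and mu mu' :: "'i \<Rightarrow> 's \<Rightarrow> 'b \<Rightarrow> real"
  assumes game: "team_game A P"
    and beta: "\<beta> \<ge> 0"
    and erg: "\<forall>nu\<in>joint_policies A. ergodic_chain (induced_chain A P (joint_prob nu))"
    and mu: "mu \<in> joint_policies A"
    and mu': "mu' \<in> joint_policies A"
  shows "((\<lambda>\<delta>. Jmv A P r \<beta> (mix_pol mu mu' \<delta>)) has_real_derivative
           (\<Sum>s\<in>UNIV. pi_pol A P (joint_prob mu) s *
              (\<Sum>a\<in>joint_actions A. joint_prob mu' s a * A_f A P r \<beta> (joint_prob mu) s a)))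
         (at_right 0)"
proof -
  let ?Q0 = "induced_chain A P (joint_prob mu)" and ?Q1 = "induced_chain A P (joint_prob mu')"
  let ?\<pi> = "\<lambda>\<delta>. pi_pol A P (mix_pol mu mu' \<delta>)"
  let ?V = "V_f A P r \<beta> (joint_prob mu)" and ?F0 = "f_s A P r \<beta> (joint_prob mu)"
  have irr: "irreducible_chain ?Q0" using erg mu by (simp add: ergodic_chain_def)
  have V: "?V s = ?F0 s - (\<Sum>t\<in>UNIV. ?\<pi> 0 t * ?F0 t) + (\<Sum>t\<in>UNIV. ?Q0 s t * ?V t)" for s
    using poisson_sol_V_f[OF game erg mu, of r \<beta>]
    unfolding poisson_sol_def Jmv_joint_prob[OF game erg mu] mix_pol_0 by blast
  have "((\<lambda>\<delta>. Jmv A P r \<beta> (mix_pol mu mu' \<delta>)) has_real_derivative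
      (\<Sum>s\<in>UNIV. ?\<pi> 0 s * ((\<Sum>t\<in>UNIV. (?Q1 s t - ?Q0 s t) * ?V t)
        + ((\<Sum>a\<in>joint_actions A. joint_prob mu' s a * f_sa A P r \<beta> (joint_prob mu) s a)
          - ?F0 s)))) (at_right 0)"
    by (rule mean_variance_mix_chain_has_derivative[OF stochastic_induced_chain[OF game mu] irr
          is_stationary_pi_pol_mix_pol[OF game erg mu mu'] V, of _ _ \<beta>
          "\<lambda>s. \<Sum>a\<in>joint_actions A. joint_prob mu s a * r s a"
          "\<lambda>s. \<Sum>a\<in>joint_actions A. joint_prob mu' s a * r s a"])
      (simp_all add: Jmv_mix_pol[OF game erg mu mu'])
  then show ?thesis
    using sum_A_f[where \<sigma>' = "joint_prob mu'",
        OF poisson_sol_V_f[OF game erg mu] sum_joint_prob[OF game mu']]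
    by simp
qed

end
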